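(* Let $d,k\ge 1$, let $g:\mathbb{R}^{k}\to\mathbb{R}$ be differentiable, and for $B\in\mathbb{R}^{k\times d}$ consider $f(z)=g(Bz)$, $f:\mathbb{R}^d\to\mathbb{R}$. Given one training sample $(x,y)\in\mathbb{R}^d\times\mathbb{R}$, suppose $f$ is trained to minimize $\frac{1}{2}(y-f(x))^2$ by gradient descent on $B$ with learning rate $\eta>0$, i.e. $B^{(t+1)}=B^{(t)}-\eta\,\nabla_B\big[\tfrac12(y-g(B^{(t)}x))^2\big]$. Let $B^{(t)}$ denote $B$ after $t$ steps and $f_t(z):=g(B^{(t)}z)$. If $B^{(0)}=\mathbf{0}$, then for every time step $t$ and every $z\in\mathbb{R}^d$, $$\nabla f_t(z)\,\nabla f_t(z)^T \propto {B^{(t)}}^T B^{(t)},$$ i.e. $\nabla f_t(z)\nabla f_t(z)^T$ is a scalar multiple of ${B^{(t)}}^TB^{(t)}$.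
   Context: $\nabla f_t(z)\in\mathbb{R}^d$ denotes the gradient of $f_t$ with respect to its input $z$. "$P\propto Q$" for matrices means $P=cQ$ for some scalar $c$. *)

theory Defs
  imports "HOL-Analysis.Analysis"
begin

text \<open>Gradient of a real-valued function on a real inner product space (here: vectors
  \<open>real^'n\<close> and matrices \<open>real^'d^'k\<close>, the latter with the Frobenius inner product):
  the unique vector G such that the Frechet derivative at x is \<open>\<lambda>h. G \<bullet> h\<close>.\<close>
definition grad :: "('a::real_inner \<Rightarrow> real) \<Rightarrow> 'a \<Rightarrow> 'a" where
  "grad f x = (THE G. (f has_derivative (\<lambda>h. G \<bullet> h)) (at x))"

end

(*
  The gradient of M \<mapsto> \<phi>(M x) is the outer product \<nabla>\<phi>(M x) x\<^sup>T, so each gradient step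
  adds a matrix of the form v x\<^sup>T; starting from 0, every iterate is B\<^sub>t = u\<^sub>t x\<^sup>T. By the
  chain rule \<nabla>f\<^sub>t(z) = B\<^sub>t\<^sup>T \<nabla>g(B\<^sub>t z) = (u\<^sub>t \<bullet> \<nabla>g(B\<^sub>t z)) x, hence \<nabla>f\<^sub>t(z) \<nabla>f\<^sub>t(z)\<^sup>T is a
  multiple of x x\<^sup>T, and so is B\<^sub>t\<^sup>T B\<^sub>t = |u\<^sub>t|\<^sup>2 x x\<^sup>T. Neither the loss nor the sign of \<eta>
  matters.
*)
theory Submission
  imports Defs
begin

lemma grad_eqI:
  fixes f :: "'a::euclidean_space \<Rightarrow> real"
  assumes "(f has_derivative (\<lambda>h. G \<bullet> h)) (at x)"
  shows "grad f x = G"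
  unfolding grad_def
proof (rule the_equality)
  fix G' assume "(f has_derivative (\<lambda>h. G' \<bullet> h)) (at x)"
  then have "(\<lambda>h. G' \<bullet> h) = (\<lambda>h. G \<bullet> h)"
    using assms has_derivative_unique by blast
  then have "(G' - G) \<bullet> (G' - G) = 0"
    by (metis inner_diff_left diff_self)
  then show "G' = G" by simp
qed (fact assms)

lemma has_derivative_grad:
  fixes f :: "'a::euclidean_space \<Rightarrow> real"
  assumes "f differentiable (at x)"
  shows "(f has_derivative (\<lambda>h. grad f x \<bullet> h)) (at x)"
proof -
  obtain L where L: "(f has_derivative L) (at x)"
    using assms differentiable_def by blast
  have "L = (\<lambda>h. adjoint L 1 \<bullet> h)"
    using adjoint_clauses(2)[OF has_derivative_linear[OF L], of 1] by (simp add: fun_eq_iff)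
  with L show ?thesis
    using grad_eqI by metis
qed

lemma grad_compose_linear:
  fixes f :: "'b::euclidean_space \<Rightarrow> real" and L :: "'a::euclidean_space \<Rightarrow> 'b"
  assumes "linear L" and "f differentiable (at (L z))"
  shows "grad (\<lambda>v. f (L v)) z = adjoint L (grad f (L z))"
proof (rule grad_eqI)
  have "((\<lambda>v. f (L v)) has_derivative (\<lambda>h. grad f (L z) \<bullet> L h)) (at z)"
    using has_derivative_compose[OF linear_imp_has_derivative[OF assms(1)]
        has_derivative_grad[OF assms(2)]] .
  then show "((\<lambda>v. f (L v)) has_derivative (\<lambda>h. adjoint L (grad f (L z)) \<bullet> h)) (at z)"
    by (simp add: adjoint_clauses(2)[OF assms(1)])
qed

definition outer_prod :: "real^'m \<Rightarrow> real^'n \<Rightarrow> real^'n^'m" where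
  "outer_prod u x = (\<chi> i j. u$i * x$j)"

lemma adjoint_matrix_vector_mult_left: "adjoint (\<lambda>M::real^'n^'m. M *v x) = (\<lambda>u. outer_prod u x)"
  by (rule adjoint_unique)
    (simp add: outer_prod_def inner_vec_def matrix_vector_mult_def sum_distrib_left algebra_simps)

lemma linear_matrix_vector_mult_left: "linear (\<lambda>M::real^'n^'m. M *v x)"
  by (rule linearI) (simp_all add: matrix_vector_mult_def vec_eq_iff sum.distrib algebra_simps sum_distrib_left)

lemma outer_prod_zero_left [simp]: "outer_prod 0 x = 0"
  by (simp add: outer_prod_def vec_eq_iff)

lemma outer_prod_diff_left: "outer_prod (u - v) x = outer_prod u x - outer_prod v x"
  by (simp add: outer_prod_def vec_eq_iff algebra_simps)

lemma outer_prod_scaleR_left: "outer_prod (a *\<^sub>R u) x = a *\<^sub>R outer_prod u x"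
  by (simp add: outer_prod_def vec_eq_iff)

lemma outer_prod_scaleR_right: "outer_prod u (a *\<^sub>R x) = a *\<^sub>R outer_prod u x"
  by (simp add: outer_prod_def vec_eq_iff algebra_simps)

lemma columnvector_mult_rowvector:
  "(columnvector u :: real^1^'m) ** rowvector x = outer_prod u x"
  by (simp add: columnvector_def rowvector_def matrix_matrix_mult_def outer_prod_def vec_eq_iff)

lemma transpose_outer_prod_mult_vector: "transpose (outer_prod u x) *v w = (u \<bullet> w) *\<^sub>R x"
  by (simp add: outer_prod_def transpose_def matrix_vector_mult_def inner_vec_def vec_eq_iff
      sum_distrib_left algebra_simps)

lemma transpose_outer_prod_mult_outer_prod:
  "transpose (outer_prod u x) ** outer_prod v w = (u \<bullet> v) *\<^sub>R outer_prod x w"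
  by (simp add: outer_prod_def transpose_def matrix_matrix_mult_def inner_vec_def vec_eq_iff
      sum_distrib_left algebra_simps)

lemma grad_compose_matrix_vector_mult:
  fixes f :: "real^'m \<Rightarrow> real" and A :: "real^'n^'m"
  assumes "f differentiable (at (A *v z))"
  shows "grad (\<lambda>v. f (A *v v)) z = transpose A *v grad f (A *v z)"
  using grad_compose_linear[OF matrix_vector_mul_linear assms] by (simp add: adjoint_matrix)

lemma grad_compose_matrix_vector_mult_left:
  fixes f :: "real^'m \<Rightarrow> real" and x :: "real^'n"
  assumes "f differentiable (at (M *v x))"
  shows "grad (\<lambda>M. f (M *v x)) M = outer_prod (grad f (M *v x)) x"
  using grad_compose_linear[OF linear_matrix_vector_mult_left assms]
  by (simp add: adjoint_matrix_vector_mult_left)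

lemma gradient_descent_iterates_outer_prod:
  fixes f :: "real^'m \<Rightarrow> real" and x :: "real^'n" and B :: "nat \<Rightarrow> real^'n^'m"
  assumes "\<forall>w. f differentiable (at w)"
    and "B 0 = 0"
    and "\<forall>t. B (Suc t) = B t - \<eta> *\<^sub>R grad (\<lambda>M. f (M *v x)) (B t)"
  shows "\<exists>u. B t = outer_prod u x"
proof (induction t)
  case 0
  show ?case
    using assms(2) outer_prod_zero_left by metis
next
  case (Suc t)
  then obtain u where "B t = outer_prod u x" by blast
  then have "B (Suc t) = outer_prod (u - \<eta> *\<^sub>R grad f (B t *v x)) x"
    using assms(1,3) by (simp add: grad_compose_matrix_vector_mult_left outer_prod_diff_left
        outer_prod_scaleR_left)
  then show ?case by blast
qed

lemma grad_compose_outer_prod_gram_proportional: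
  fixes f :: "real^'m \<Rightarrow> real" and u :: "real^'m" and x z :: "real^'n"
  assumes "f differentiable (at (outer_prod u x *v z))"
  shows "\<exists>c. (columnvector (grad (\<lambda>v. f (outer_prod u x *v v)) z) :: real^1^'n)
           ** rowvector (grad (\<lambda>v. f (outer_prod u x *v v)) z)
         = c *\<^sub>R (transpose (outer_prod u x) ** outer_prod u x)"
proof -
  define a where "a = u \<bullet> grad f (outer_prod u x *v z)"
  have "grad (\<lambda>v. f (outer_prod u x *v v)) z = a *\<^sub>R x"
    using assms by (simp add: grad_compose_matrix_vector_mult transpose_outer_prod_mult_vector a_def
        del: transpose_matrix_vector)
  then have "(columnvector (grad (\<lambda>v. f (outer_prod u x *v v)) z) :: real^1^'n)
           ** rowvector (grad (\<lambda>v. f (outer_prod u x *v v)) z) = a\<^sup>2 *\<^sub>R outer_prod x x"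
    by (simp add: columnvector_mult_rowvector outer_prod_scaleR_left outer_prod_scaleR_right
        power2_eq_square)
  \<comment> \<open>if \<open>u = 0\<close> then \<open>a = 0\<close>, so the junk value of \<open>a\<^sup>2 / 0\<close> is harmless\<close>
  also have "\<dots> = (a\<^sup>2 / (u \<bullet> u)) *\<^sub>R (transpose (outer_prod u x) ** outer_prod u x)"
    by (cases "u = 0") (simp_all add: a_def transpose_outer_prod_mult_outer_prod)
  finally show ?thesis by blast
qed

theorem proposition1:
  fixes g :: "real^'k \<Rightarrow> real" and x :: "real^'d" and y \<eta> :: real
    and B :: "nat \<Rightarrow> real^'d^'k"
  assumes "\<forall>w. g differentiable (at w)"
    and "\<eta> > 0"
    and "B 0 = 0"
    and "\<forall>t. B (Suc t) = B t - \<eta> *\<^sub>R grad (\<lambda>M::real^'d^'k. (1/2) * (y - g (M *v x))\<^sup>2) (B t)"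
  shows "\<forall>t (z::real^'d). \<exists>c::real.
           (columnvector (grad (\<lambda>v. g (B t *v v)) z) :: real^1^'d)
             ** rowvector (grad (\<lambda>v. g (B t *v v)) z)
           = c *\<^sub>R (transpose (B t) ** B t)"
proof (intro allI)
  fix t and z :: "real^'d"
  have "\<forall>w. (\<lambda>w. (1/2) * (y - g w)\<^sup>2) differentiable (at w)"
    using assms(1) by (intro allI derivative_intros) auto
  then obtain u where "B t = outer_prod u x"
    using gradient_descent_iterates_outer_prod[of "\<lambda>w. (1/2) * (y - g w)\<^sup>2", OF _ assms(3,4)]
    by blast
  then show "\<exists>c. (columnvector (grad (\<lambda>v. g (B t *v v)) z) :: real^1^'d)
             ** rowvector (grad (\<lambda>v. g (B t *v v)) z) = c *\<^sub>R (transpose (B t) ** B t)"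
    using grad_compose_outer_prod_gram_proportional[OF assms(1)[rule_format]] by simp
qed

end
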